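(* Let $G$ be a simplicial group acting on a simplicial set $X$, let $g\in G_1$ be a loop, and let $\sigma\in X_n$. Then for any $0\le m\le n$ and $0\le k\le n+1$, \[ P^{n+1}_k\bigl(A^m_g(\sigma)\bigr)=\begin{cases}(-1)^k\,(1\otimes A^{m-k}_g)\,P^n_k(\sigma)&\text{if }k\le m,\\(A^m_g\otimes1)\,P^n_{k-1}(\sigma)&\text{if }k>m.\end{cases} \]
   Context: Chains are normalized. A loop is a $1$-simplex $g$ with $\partial_0g=\partial_1g=1_0$. For $I=\{i_1<\dots<i_r\}$ write $s_I=s_{i_r}\circ\dots\circ s_{i_1}$, and $[n]=\{0,\dots,n\}$. For a loop $g$ and $0\le m\le n$, $A^m_g\colon C_n(X)\to C_{n+1}(X)$ is $\sigma\mapsto(s_{[n]\setminus m}\,g)\cdot s_m\sigma$ (here $s_{[n]\setminus m}g$ means $s_I g$ for $I=[n]\setminus\{m\}$). For $0\le k\le n$, $P^n_k\colon C_n(X)\to C_k(X)\otimes C_{n-k}(X)$, $\sigma\mapsto\sigma(0,\dots,k)\otimes\sigma(k,\dots,n)$ (front and back faces); tensor products of maps follow the Koszul sign rule. *)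

theory Defs
  imports "HOL-Library.Poly_Mapping" "HOL-Algebra.Group"
begin

definition simplicial_set ::
  "(nat \<Rightarrow> 'x set) \<Rightarrow> (nat \<Rightarrow> 'x \<Rightarrow> 'x) \<Rightarrow> (nat \<Rightarrow> 'x \<Rightarrow> 'x) \<Rightarrow> bool" where
  "simplicial_set X d s \<longleftrightarrow>
     (\<forall>n i x. x \<in> X (Suc n) \<and> i \<le> Suc n \<longrightarrow> d i x \<in> X n) \<and>
     (\<forall>n i x. x \<in> X n \<and> i \<le> n \<longrightarrow> s i x \<in> X (Suc n)) \<and>
     (\<forall>n i j x. x \<in> X (Suc (Suc n)) \<and> i < j \<and> j \<le> Suc (Suc n) \<longrightarrow> d i (d j x) = d (j - 1) (d i x)) \<and>
     (\<forall>n i j x. x \<in> X n \<and> i \<le> j \<and> j \<le> n \<longrightarrow> s i (s j x) = s (Suc j) (s i x)) \<and>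
     (\<forall>n i j x. x \<in> X n \<and> i < j \<and> j \<le> n \<longrightarrow> d i (s j x) = s (j - 1) (d i x)) \<and>
     (\<forall>n j x. x \<in> X n \<and> j \<le> n \<longrightarrow> d j (s j x) = x \<and> d (Suc j) (s j x) = x) \<and>
     (\<forall>n i j x. x \<in> X n \<and> j \<le> n \<and> Suc j < i \<and> i \<le> Suc n \<longrightarrow> d i (s j x) = s j (d (i - 1) x))"

definition simplicial_group ::
  "(nat \<Rightarrow> 'g monoid) \<Rightarrow> (nat \<Rightarrow> 'g \<Rightarrow> 'g) \<Rightarrow> (nat \<Rightarrow> 'g \<Rightarrow> 'g) \<Rightarrow> bool" where
  "simplicial_group G dG sG \<longleftrightarrow>
     simplicial_set (\<lambda>n. carrier (G n)) dG sG \<and>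
     (\<forall>n. group (G n)) \<and>
     (\<forall>n i. i \<le> Suc n \<longrightarrow> dG i \<in> hom (G (Suc n)) (G n)) \<and>
     (\<forall>n i. i \<le> n \<longrightarrow> sG i \<in> hom (G n) (G (Suc n)))"

definition simplicial_action ::
  "(nat \<Rightarrow> 'g monoid) \<Rightarrow> (nat \<Rightarrow> 'g \<Rightarrow> 'g) \<Rightarrow> (nat \<Rightarrow> 'g \<Rightarrow> 'g) \<Rightarrow>
   (nat \<Rightarrow> 'x set) \<Rightarrow> (nat \<Rightarrow> 'x \<Rightarrow> 'x) \<Rightarrow> (nat \<Rightarrow> 'x \<Rightarrow> 'x) \<Rightarrow>
   ('g \<Rightarrow> 'x \<Rightarrow> 'x) \<Rightarrow> bool" where
  "simplicial_action G dG sG X d s act \<longleftrightarrow>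
     simplicial_group G dG sG \<and> simplicial_set X d s \<and>
     (\<forall>n g x. g \<in> carrier (G n) \<and> x \<in> X n \<longrightarrow> act g x \<in> X n) \<and>
     (\<forall>n x. x \<in> X n \<longrightarrow> act \<one>\<^bsub>G n\<^esub> x = x) \<and>
     (\<forall>n g h x. g \<in> carrier (G n) \<and> h \<in> carrier (G n) \<and> x \<in> X n \<longrightarrow>
        act (g \<otimes>\<^bsub>G n\<^esub> h) x = act g (act h x)) \<and>
     (\<forall>n i g x. g \<in> carrier (G (Suc n)) \<and> x \<in> X (Suc n) \<and> i \<le> Suc n \<longrightarrow>
        d i (act g x) = act (dG i g) (d i x)) \<and>
     (\<forall>n i g x. g \<in> carrier (G n) \<and> x \<in> X n \<and> i \<le> n \<longrightarrow>
        s i (act g x) = act (sG i g) (s i x))"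

definition is_loop :: "(nat \<Rightarrow> 'g monoid) \<Rightarrow> (nat \<Rightarrow> 'g \<Rightarrow> 'g) \<Rightarrow> 'g \<Rightarrow> bool" where
  "is_loop G dG g \<longleftrightarrow> g \<in> carrier (G 1) \<and> dG 0 g = \<one>\<^bsub>G 0\<^esub> \<and> dG 1 g = \<one>\<^bsub>G 0\<^esub>"

text \<open>s_I for I = {i_1 < ... < i_r} given as the increasing list [i_1,...,i_r]:
  s_I = s_{i_r} o ... o s_{i_1} (apply s_{i_1} first).\<close>

definition iter_degen :: "(nat \<Rightarrow> 'a \<Rightarrow> 'a) \<Rightarrow> nat list \<Rightarrow> 'a \<Rightarrow> 'a" where
  "iter_degen s is x = foldl (\<lambda>y i. s i y) x is"

definition all_but :: "nat \<Rightarrow> nat \<Rightarrow> nat list" where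
  "all_but n m = filter (\<lambda>i. i \<noteq> m) [0..<Suc n]"

text \<open>Front face sigma(0,...,k) of an n-simplex: d_{k+1} o ... o d_n (apply d_n first).\<close>

definition front_face :: "(nat \<Rightarrow> 'x \<Rightarrow> 'x) \<Rightarrow> nat \<Rightarrow> nat \<Rightarrow> 'x \<Rightarrow> 'x" where
  "front_face d n k x = foldl (\<lambda>y i. d i y) x (rev [Suc k..<Suc n])"

text \<open>Back face sigma(k,...,n): d_0 applied k times.\<close>

definition back_face :: "(nat \<Rightarrow> 'x \<Rightarrow> 'x) \<Rightarrow> nat \<Rightarrow> 'x \<Rightarrow> 'x" where
  "back_face d k x = (d 0 ^^ k) x"

text \<open>C_n(X) = Z[X_n] / (degenerate simplices), represented as the free abelian group
  on the nondegenerate n-simplices (finitely supported int-valued functions, 'x frag).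
  The class of an n-simplex sigma is frag_of sigma, or 0 if sigma is degenerate.\<close>

definition degenerate :: "(nat \<Rightarrow> 'x set) \<Rightarrow> (nat \<Rightarrow> 'x \<Rightarrow> 'x) \<Rightarrow> nat \<Rightarrow> 'x \<Rightarrow> bool" where
  "degenerate X s n x \<longleftrightarrow> (\<exists>m i y. n = Suc m \<and> i \<le> m \<and> y \<in> X m \<and> x = s i y)"

definition nchain :: "(nat \<Rightarrow> 'x set) \<Rightarrow> (nat \<Rightarrow> 'x \<Rightarrow> 'x) \<Rightarrow> nat \<Rightarrow> 'x \<Rightarrow> ('x \<Rightarrow>\<^sub>0 int)" where
  "nchain X s n x = (if degenerate X s n x then 0 else frag_of x)"

text \<open>Tensor product of chains: C_k \<otimes> C_l is free on pairs of nondegenerate simplices.\<close>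

definition tensor :: "('x \<Rightarrow>\<^sub>0 int) \<Rightarrow> ('y \<Rightarrow>\<^sub>0 int) \<Rightarrow> ('x \<times> 'y \<Rightarrow>\<^sub>0 int)" where
  "tensor a b = frag_extend (\<lambda>x. frag_extend (\<lambda>y. frag_of (x, y)) b) a"

text \<open>Tensor product of maps f \<otimes> h with the Koszul sign rule, applied to an element p of
  C_k \<otimes> C_l (k = degree of the first factor, dh = degree of h):
  (f \<otimes> h)(a \<otimes> b) = (-1)^(dh * k) f(a) \<otimes> h(b).\<close>

definition tensor_map ::
  "(('x \<Rightarrow>\<^sub>0 int) \<Rightarrow> ('x \<Rightarrow>\<^sub>0 int)) \<Rightarrow> (('x \<Rightarrow>\<^sub>0 int) \<Rightarrow> ('x \<Rightarrow>\<^sub>0 int)) \<Rightarrow> nat \<Rightarrow> nat \<Rightarrow>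
   ('x \<times> 'x \<Rightarrow>\<^sub>0 int) \<Rightarrow> ('x \<times> 'x \<Rightarrow>\<^sub>0 int)" where
  "tensor_map f h dh k p =
     frag_extend (\<lambda>(a, b). frag_cmul ((-1) ^ (dh * k)) (tensor (f (frag_of a)) (h (frag_of b)))) p"

text \<open>A^m_g : C_n(X) -> C_{n+1}(X), sigma |-> (s_{[n]\{m}} g) . s_m sigma, extended linearly.\<close>

definition A_op ::
  "(nat \<Rightarrow> 'x set) \<Rightarrow> (nat \<Rightarrow> 'x \<Rightarrow> 'x) \<Rightarrow> (nat \<Rightarrow> 'g \<Rightarrow> 'g) \<Rightarrow> ('g \<Rightarrow> 'x \<Rightarrow> 'x) \<Rightarrow>
   'g \<Rightarrow> nat \<Rightarrow> nat \<Rightarrow> ('x \<Rightarrow>\<^sub>0 int) \<Rightarrow> ('x \<Rightarrow>\<^sub>0 int)" where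
  "A_op X s sG act g n m c =
     frag_extend (\<lambda>x. nchain X s (Suc n) (act (iter_degen sG (all_but n m) g) (s m x))) c"

text \<open>P^n_k : C_n(X) -> C_k(X) \<otimes> C_{n-k}(X), sigma |-> sigma(0..k) \<otimes> sigma(k..n).\<close>

definition P_op ::
  "(nat \<Rightarrow> 'x set) \<Rightarrow> (nat \<Rightarrow> 'x \<Rightarrow> 'x) \<Rightarrow> (nat \<Rightarrow> 'x \<Rightarrow> 'x) \<Rightarrow> nat \<Rightarrow> nat \<Rightarrow>
   ('x \<Rightarrow>\<^sub>0 int) \<Rightarrow> ('x \<times> 'x \<Rightarrow>\<^sub>0 int)" where
  "P_op X d s n k c =
     frag_extend (\<lambda>x. tensor (nchain X s k (front_face d n k x))
                             (nchain X s (n - k) (back_face d k x))) c"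

end

theory Submission
  imports Defs
begin

(*
  Write tau = (s_{[n]\{m}} g) . s_m sigma. Faces commute with the action, so the front and back
  faces of tau are computed factorwise. Moving faces past degeneracies, the front k-face of s_m sigma
  is sigma(0..k) for k <= m and s_m sigma(0..k-1) otherwise, and its back face is s_{m-k} sigma(k..n)
  resp. sigma(k-1..n). Because g is a loop, the same faces of s_{[n]\{m}} g are either the unit or
  again of the form s_{[n']\{m'}} g. So both tensor factors of P_k(A^m_g sigma) are those of the
  right-hand side, and the sign (-1)^k cancels the Koszul sign of 1 (x) A. Degenerate simplices cause
  no trouble: A^m_g maps degenerate simplices to degenerate ones, and for a degenerate simplex one of
  its two Alexander-Whitney faces is degenerate.
*)

lemma tensor_zero_left [simp]: "tensor 0 b = 0"
  by (simp add: tensor_def)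

lemma tensor_zero_right [simp]: "tensor a 0 = 0"
  by (simp add: tensor_def frag_extend_eq_0)

lemma tensor_frag_of [simp]: "tensor (frag_of a) (frag_of b) = frag_of (a, b)"
  by (simp add: tensor_def)

lemma tensor_map_tensor_nchain:
  assumes "f 0 = 0" and "h 0 = 0"
  shows "tensor_map f h dh k (tensor (nchain X s p a) (nchain X s q b)) =
    frag_cmul ((-1) ^ (dh * k)) (tensor (f (nchain X s p a)) (h (nchain X s q b)))"
  using assms by (simp add: tensor_map_def nchain_def)

lemma A_op_zero [simp]: "A_op X s sG act g n m 0 = 0"
  by (simp add: A_op_def)

locale sset =
  fixes X :: "nat \<Rightarrow> 'x set" and d s :: "nat \<Rightarrow> 'x \<Rightarrow> 'x"
  assumes simplicial: "simplicial_set X d s"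
begin

lemma d_closed: "x \<in> X (Suc n) \<Longrightarrow> i \<le> Suc n \<Longrightarrow> d i x \<in> X n"
  using simplicial unfolding simplicial_set_def by (elim conjE) meson

lemma s_closed: "x \<in> X n \<Longrightarrow> i \<le> n \<Longrightarrow> s i x \<in> X (Suc n)"
  using simplicial unfolding simplicial_set_def by (elim conjE) meson

lemma s_s_le: "x \<in> X n \<Longrightarrow> i \<le> j \<Longrightarrow> j \<le> n \<Longrightarrow> s i (s j x) = s (Suc j) (s i x)"
  using simplicial unfolding simplicial_set_def by (elim conjE) meson

lemma d_s_less: "x \<in> X n \<Longrightarrow> i < j \<Longrightarrow> j \<le> n \<Longrightarrow> d i (s j x) = s (j - 1) (d i x)"
  using simplicial unfolding simplicial_set_def by (elim conjE) meson

lemma d_s_same: "x \<in> X n \<Longrightarrow> j \<le> n \<Longrightarrow> d j (s j x) = x"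
  using simplicial unfolding simplicial_set_def by (elim conjE) meson

lemma d_Suc_s_same: "x \<in> X n \<Longrightarrow> j \<le> n \<Longrightarrow> d (Suc j) (s j x) = x"
  using simplicial unfolding simplicial_set_def by (elim conjE) meson

lemma d_s_greater:
  "x \<in> X n \<Longrightarrow> Suc j < i \<Longrightarrow> i \<le> Suc n \<Longrightarrow> d i (s j x) = s j (d (i - 1) x)"
  using simplicial unfolding simplicial_set_def
  by (elim conjE) (meson Suc_lessD less_Suc_eq_le order.strict_trans2)

lemma front_face_self [simp]: "front_face d n n x = x"
  by (simp add: front_face_def)

lemma front_face_Suc: "k \<le> n \<Longrightarrow> front_face d (Suc n) k x = front_face d n k (d (Suc n) x)"
  by (simp add: front_face_def)

lemma front_face_closed: "x \<in> X n \<Longrightarrow> k \<le> n \<Longrightarrow> front_face d n k x \<in> X k"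
proof (induction n arbitrary: x)
  case (Suc n)
  then show ?case
    by (cases "k = Suc n") (simp_all add: front_face_Suc d_closed)
qed simp

lemma back_face_0 [simp]: "back_face d 0 x = x"
  by (simp add: back_face_def)

lemma back_face_Suc: "back_face d (Suc k) x = d 0 (back_face d k x)"
  by (simp add: back_face_def)

lemma back_face_Suc': "back_face d (Suc k) x = back_face d k (d 0 x)"
  by (simp add: back_face_def funpow_Suc_right del: funpow.simps)

lemma back_face_add: "back_face d (a + b) x = back_face d a (back_face d b x)"
  by (simp add: back_face_def funpow_add)

lemma back_face_closed: "x \<in> X n \<Longrightarrow> k \<le> n \<Longrightarrow> back_face d k x \<in> X (n - k)"
proof (induction k)
  case (Suc k)
  then have "back_face d k x \<in> X (Suc (n - Suc k))"
    by (simp add: Suc_diff_Suc)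
  then show ?case
    by (simp add: back_face_Suc d_closed)
qed simp

lemma front_face_s_ge:
  "x \<in> X n \<Longrightarrow> k \<le> i \<Longrightarrow> i \<le> n \<Longrightarrow> front_face d (Suc n) k (s i x) = front_face d n k x"
proof (induction n arbitrary: x i)
  case 0
  then show ?case
    by (simp add: front_face_Suc d_Suc_s_same)
next
  case (Suc n)
  show ?case
  proof (cases "i = Suc n")
    case True
    with Suc.prems show ?thesis
      by (simp add: front_face_Suc d_Suc_s_same)
  next
    case False
    with Suc show ?thesis
      by (simp add: front_face_Suc d_s_greater d_closed)
  qed
qed

lemma front_face_s_le:
  "x \<in> X n \<Longrightarrow> i \<le> k \<Longrightarrow> k \<le> n \<Longrightarrow>
    front_face d (Suc n) (Suc k) (s i x) = s i (front_face d n k x)"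
proof (induction n arbitrary: x)
  case (Suc n)
  show ?case
  proof (cases "k = Suc n")
    case False
    with Suc.prems have k: "k \<le> n"
      by simp
    have "front_face d (Suc (Suc n)) (Suc k) (s i x) =
        front_face d (Suc n) (Suc k) (s i (d (Suc n) x))"
      using Suc.prems k by (simp add: front_face_Suc d_s_greater)
    also have "\<dots> = s i (front_face d n k (d (Suc n) x))"
      using Suc k by (simp add: d_closed)
    finally show ?thesis
      using k by (simp add: front_face_Suc)
  qed simp
qed simp

lemma back_face_s_ge:
  "x \<in> X n \<Longrightarrow> k \<le> i \<Longrightarrow> i \<le> n \<Longrightarrow> back_face d k (s i x) = s (i - k) (back_face d k x)"
proof (induction k)
  case (Suc k)
  have "back_face d (Suc k) (s i x) = d 0 (s (i - k) (back_face d k x))"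
    using Suc by (simp add: back_face_Suc)
  also have "\<dots> = s (i - Suc k) (back_face d (Suc k) x)"
    using Suc.prems d_s_less[of "back_face d k x" "n - k" 0 "i - k"] back_face_closed[of x n k]
    by (simp add: back_face_Suc)
  finally show ?case .
qed simp

lemma back_face_s_le:
  "x \<in> X n \<Longrightarrow> i \<le> k \<Longrightarrow> k \<le> n \<Longrightarrow> back_face d (Suc k) (s i x) = back_face d k x"
proof (induction i arbitrary: x k n)
  case 0
  then show ?case
    by (simp add: back_face_Suc' d_s_same)
next
  case (Suc i)
  then obtain k' n' where k: "k = Suc k'" and n: "n = Suc n'"
    by (cases k; cases n) auto
  have "back_face d (Suc k) (s (Suc i) x) = back_face d k (s i (d 0 x))"
    using Suc.prems by (simp add: back_face_Suc' d_s_less n)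
  also have "\<dots> = back_face d k' (d 0 x)"
    using Suc.IH[of "d 0 x" n' k'] Suc.prems k n d_closed[of x n' 0] by simp
  finally show ?case
    using k by (simp add: back_face_Suc')
qed

lemma degenerateI: "y \<in> X n \<Longrightarrow> i \<le> n \<Longrightarrow> degenerate X s (Suc n) (s i y)"
  unfolding degenerate_def by blast

lemma degenerate_front_face_or_back_face:
  assumes "degenerate X s N x" and "k \<le> N"
  shows "degenerate X s k (front_face d N k x) \<or> degenerate X s (N - k) (back_face d k x)"
proof -
  obtain n i y where N: "N = Suc n" and i: "i \<le> n" and y: "y \<in> X n" and x: "x = s i y"
    using assms(1) unfolding degenerate_def by blast
  show ?thesis
  proof (cases "k \<le> i")
    case True
    then have "degenerate X s (Suc (n - k)) (s (i - k) (back_face d k y))"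
      using i y by (intro degenerateI back_face_closed) auto
    then show ?thesis
      using True i y by (simp add: N x back_face_s_ge Suc_diff_le)
  next
    case False
    with assms(2) obtain k' where k: "k = Suc k'" and "i \<le> k'" "k' \<le> n"
      by (cases k) (auto simp: N)
    then have "degenerate X s (Suc k') (s i (front_face d n k' y))"
      using y by (intro degenerateI front_face_closed) auto
    then show ?thesis
      using k \<open>i \<le> k'\<close> \<open>k' \<le> n\<close> y by (simp add: N x front_face_s_le)
  qed
qed

lemma P_op_nchain:
  assumes "k \<le> N"
  shows "P_op X d s N k (nchain X s N x) =
    tensor (nchain X s k (front_face d N k x)) (nchain X s (N - k) (back_face d k x))"
proof (cases "degenerate X s N x")
  case True
  from degenerate_front_face_or_back_face[OF True assms]
  have "tensor (nchain X s k (front_face d N k x)) (nchain X s (N - k) (back_face d k x)) = 0"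
    by (elim disjE) (simp_all add: nchain_def)
  with True show ?thesis
    by (simp add: P_op_def nchain_def)
qed (simp add: P_op_def nchain_def)

end

locale sset_action =
  fixes G :: "nat \<Rightarrow> 'g monoid" and dG sG :: "nat \<Rightarrow> 'g \<Rightarrow> 'g"
    and X :: "nat \<Rightarrow> 'x set" and d s :: "nat \<Rightarrow> 'x \<Rightarrow> 'x"
    and act :: "'g \<Rightarrow> 'x \<Rightarrow> 'x"
  assumes action: "simplicial_action G dG sG X d s act"
begin

lemma simplicial_group: "simplicial_group G dG sG"
  using action unfolding simplicial_action_def by blast

sublocale X: sset X d s
  using action unfolding simplicial_action_def sset_def by blast

sublocale G: sset "\<lambda>n. carrier (G n)" dG sG
  using simplicial_group unfolding simplicial_group_def sset_def by blast

lemma act_closed: "a \<in> carrier (G n) \<Longrightarrow> x \<in> X n \<Longrightarrow> act a x \<in> X n"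
  using action unfolding simplicial_action_def by (elim conjE) meson

lemma act_one: "x \<in> X n \<Longrightarrow> act \<one>\<^bsub>G n\<^esub> x = x"
  using action unfolding simplicial_action_def by (elim conjE) meson

lemma d_act:
  "a \<in> carrier (G (Suc n)) \<Longrightarrow> x \<in> X (Suc n) \<Longrightarrow> i \<le> Suc n \<Longrightarrow>
    d i (act a x) = act (dG i a) (d i x)"
  using action unfolding simplicial_action_def by (elim conjE) meson

lemma s_act: "a \<in> carrier (G n) \<Longrightarrow> x \<in> X n \<Longrightarrow> i \<le> n \<Longrightarrow> s i (act a x) = act (sG i a) (s i x)"
  using action unfolding simplicial_action_def by (elim conjE) meson

lemma dG_one: "i \<le> Suc n \<Longrightarrow> dG i \<one>\<^bsub>G (Suc n)\<^esub> = \<one>\<^bsub>G n\<^esub>"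
  using simplicial_group unfolding simplicial_group_def by (blast intro: hom_one)

lemma sG_one: "i \<le> n \<Longrightarrow> sG i \<one>\<^bsub>G n\<^esub> = \<one>\<^bsub>G (Suc n)\<^esub>"
  using simplicial_group unfolding simplicial_group_def by (blast intro: hom_one)

lemma back_face_one: "k \<le> n \<Longrightarrow> back_face dG k \<one>\<^bsub>G n\<^esub> = \<one>\<^bsub>G (n - k)\<^esub>"
proof (induction k)
  case (Suc k)
  then have "n - k = Suc (n - Suc k)"
    by simp
  with Suc show ?case
    by (simp add: G.back_face_Suc dG_one)
qed simp

lemma front_face_act:
  "a \<in> carrier (G n) \<Longrightarrow> x \<in> X n \<Longrightarrow> k \<le> n \<Longrightarrow>
    front_face d n k (act a x) = act (front_face dG n k a) (front_face d n k x)"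
proof (induction n arbitrary: a x)
  case (Suc n)
  show ?case
  proof (cases "k = Suc n")
    case False
    with Suc.prems have "k \<le> n"
      by simp
    with Suc show ?thesis
      by (simp add: X.front_face_Suc G.front_face_Suc d_act X.d_closed G.d_closed)
  qed simp
qed simp

lemma back_face_act:
  "a \<in> carrier (G n) \<Longrightarrow> x \<in> X n \<Longrightarrow> k \<le> n \<Longrightarrow>
    back_face d k (act a x) = act (back_face dG k a) (back_face d k x)"
proof (induction k)
  case (Suc k)
  then have "n - k = Suc (n - Suc k)"
    by simp
  with Suc.prems have "back_face dG k a \<in> carrier (G (Suc (n - Suc k)))"
    and "back_face d k x \<in> X (Suc (n - Suc k))"
    using G.back_face_closed[of a n k] X.back_face_closed[of x n k] by simp_all
  with Suc show ?case
    by (simp add: X.back_face_Suc G.back_face_Suc d_act)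
qed simp

lemma degenerate_act_s:
  "a \<in> carrier (G n) \<Longrightarrow> x \<in> X n \<Longrightarrow> i \<le> n \<Longrightarrow> degenerate X s (Suc n) (act (sG i a) (s i x))"
  by (metis s_act act_closed X.degenerateI)

end

lemma iter_degen_all_but_0 [simp]: "iter_degen s (all_but 0 0) x = x"
  by (simp add: all_but_def iter_degen_def)

lemma iter_degen_all_but_Suc:
  "m \<le> n \<Longrightarrow> iter_degen s (all_but (Suc n) m) x = s (Suc n) (iter_degen s (all_but n m) x)"
  by (simp add: all_but_def iter_degen_def)

lemma iter_degen_all_but_Suc_Suc:
  "iter_degen s (all_but (Suc n) (Suc n)) x = s n (iter_degen s (all_but n n) x)"
proof -
  have "all_but k k = [0..<k]" for k
    by (simp add: all_but_def filter_id_conv)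
  then show ?thesis
    by (simp add: iter_degen_def)
qed

locale sset_action_loop = sset_action +
  fixes g :: 'g
  assumes loop: "is_loop G dG g"
begin

abbreviation loop_degen :: "nat \<Rightarrow> nat \<Rightarrow> 'g" where
  "loop_degen n m \<equiv> iter_degen sG (all_but n m) g"

lemma loop_degen_closed: "m \<le> n \<Longrightarrow> loop_degen n m \<in> carrier (G (Suc n))"
proof (induction n arbitrary: m)
  case 0
  then show ?case
    using loop by (simp add: is_loop_def)
next
  case (Suc n)
  then show ?case
    by (cases "m = Suc n")
      (simp_all add: iter_degen_all_but_Suc iter_degen_all_but_Suc_Suc G.s_closed)
qed

lemma front_face_loop_degen_le:
  "k \<le> m \<Longrightarrow> m \<le> n \<Longrightarrow> front_face dG (Suc n) k (loop_degen n m) = \<one>\<^bsub>G k\<^esub>"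
proof (induction n arbitrary: m k)
  case 0
  then show ?case
    using loop by (simp add: is_loop_def G.front_face_Suc)
next
  case (Suc n)
  show ?case
  proof (cases "m = Suc n")
    case True
    have h: "loop_degen n n \<in> carrier (G (Suc n))"
      by (simp add: loop_degen_closed)
    show ?thesis
    proof (cases "k \<le> n")
      case True
      with \<open>m = Suc n\<close> Suc.IH[of k n] show ?thesis
        by (simp add: iter_degen_all_but_Suc_Suc G.front_face_s_ge[OF h])
    next
      case False
      with Suc.prems \<open>m = Suc n\<close> have "k = Suc n"
        by simp
      with \<open>m = Suc n\<close> Suc.IH[of n n] show ?thesis
        by (simp add: iter_degen_all_but_Suc_Suc G.front_face_s_le[OF h] sG_one)
    qed
  next
    case False
    with Suc.prems have "m \<le> n"
      by simp
    with Suc show ?thesis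
      by (simp add: iter_degen_all_but_Suc G.front_face_s_ge loop_degen_closed)
  qed
qed

lemma front_face_loop_degen_ge:
  "m \<le> k \<Longrightarrow> k \<le> n \<Longrightarrow> front_face dG (Suc n) (Suc k) (loop_degen n m) = loop_degen k m"
proof (induction n)
  case (Suc n)
  show ?case
  proof (cases "k = Suc n")
    case False
    with Suc.prems have "k \<le> n"
      by simp
    with Suc show ?thesis
      by (simp add: iter_degen_all_but_Suc G.front_face_s_ge loop_degen_closed)
  qed simp
qed simp

lemma d0_loop_degen_Suc: "m \<le> n \<Longrightarrow> dG 0 (loop_degen (Suc n) (Suc m)) = loop_degen n m"
proof (induction n arbitrary: m)
  case 0
  then show ?case
    using loop G.d_s_same[of g 1 0] by (simp add: is_loop_def iter_degen_all_but_Suc_Suc)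
next
  case (Suc n)
  show ?case
  proof (cases "m = Suc n")
    case True
    have "loop_degen (Suc n) (Suc n) \<in> carrier (G (Suc (Suc n)))"
      by (simp add: loop_degen_closed)
    with True Suc.IH[of n] show ?thesis
      by (simp add: iter_degen_all_but_Suc_Suc G.d_s_less)
  next
    case False
    with Suc.prems have "m \<le> n"
      by simp
    moreover from this have "loop_degen (Suc n) (Suc m) \<in> carrier (G (Suc (Suc n)))"
      by (simp add: loop_degen_closed)
    ultimately show ?thesis
      using Suc.IH[of m] by (simp add: iter_degen_all_but_Suc G.d_s_less)
  qed
qed

lemma d0_loop_degen_0: "dG 0 (loop_degen n 0) = \<one>\<^bsub>G n\<^esub>"
proof (induction n)
  case 0
  then show ?case
    using loop by (simp add: is_loop_def)
next
  case (Suc n)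
  have "loop_degen n 0 \<in> carrier (G (Suc n))"
    by (simp add: loop_degen_closed)
  with Suc show ?case
    by (simp add: iter_degen_all_but_Suc G.d_s_less sG_one)
qed

lemma back_face_loop_degen_le:
  "k \<le> m \<Longrightarrow> m \<le> n \<Longrightarrow> back_face dG k (loop_degen n m) = loop_degen (n - k) (m - k)"
proof (induction k)
  case (Suc k)
  then have "m - k = Suc (m - Suc k)" and "n - k = Suc (n - Suc k)"
    by simp_all
  with Suc show ?case
    by (simp add: G.back_face_Suc d0_loop_degen_Suc)
qed simp

lemma back_face_loop_degen_ge:
  assumes "m \<le> k" and "k \<le> n"
  shows "back_face dG (Suc k) (loop_degen n m) = \<one>\<^bsub>G (n - k)\<^esub>"
proof -
  have "Suc k = (k - m) + Suc m"
    using assms(1) by simp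
  then have "back_face dG (Suc k) (loop_degen n m) =
      back_face dG (k - m) (dG 0 (loop_degen (n - m) 0))"
    using assms by (simp only: G.back_face_add G.back_face_Suc back_face_loop_degen_le) simp
  also have "\<dots> = \<one>\<^bsub>G (n - k)\<^esub>"
    using assms by (simp add: d0_loop_degen_0 back_face_one)
  finally show ?thesis .
qed

lemma loop_degen_eq_s:
  "j \<le> n \<Longrightarrow> j \<noteq> m \<Longrightarrow> m \<le> n \<Longrightarrow> \<exists>a \<in> carrier (G n). loop_degen n m = sG j a"
proof (induction n arbitrary: m j)
  case (Suc n)
  show ?case
  proof (cases "m = Suc n")
    case True
    show ?thesis
    proof (cases "j = n")
      case False
      with Suc.prems True obtain n' where n: "n = Suc n'" and "j \<le> n'"
        by (cases n) auto
      moreover obtain a where a: "a \<in> carrier (G n)" and "loop_degen n n = sG j a"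
        using Suc.IH[of j n] Suc.prems True False by auto
      ultimately have "loop_degen (Suc n) m = sG j (sG n' a)"
        using True G.s_s_le[of a n j n'] by (simp add: iter_degen_all_but_Suc_Suc)
      then show ?thesis
        using a n G.s_closed by auto
    qed (use True loop_degen_closed[of n n] in \<open>auto simp: iter_degen_all_but_Suc_Suc\<close>)
  next
    case False
    with Suc.prems have m: "m \<le> n"
      by simp
    show ?thesis
    proof (cases "j = Suc n")
      case False
      with Suc.prems obtain a where a: "a \<in> carrier (G n)" and "loop_degen n m = sG j a"
        using Suc.IH[of j m] m by auto
      then have "loop_degen (Suc n) m = sG j (sG n a)"
        using m False Suc.prems G.s_s_le[of a n j n] by (simp add: iter_degen_all_but_Suc)
      then show ?thesis
        using a G.s_closed by auto
    qed (use m loop_degen_closed[of m n] in \<open>auto simp: iter_degen_all_but_Suc\<close>)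
  qed
qed simp

abbreviation A_simplex where
  "A_simplex n m x \<equiv> act (loop_degen n m) (s m x)"

text \<open>If x = s_i y, then s_m x = s_j z for some j \<noteq> m; since s_{[n]\{m}} g = s_j a as well,
  the result is s_j (a z).\<close>

lemma degenerate_A_simplex:
  assumes "degenerate X s n x" and "m \<le> n"
  shows "degenerate X s (Suc n) (A_simplex n m x)"
proof -
  obtain n' i y where n: "n = Suc n'" and "i \<le> n'" and y: "y \<in> X n'" and x: "x = s i y"
    using assms(1) unfolding degenerate_def by blast
  obtain j z where "j \<le> n" "j \<noteq> m" "z \<in> X n" and "s m x = s j z"
  proof (cases "i < m")
    case True
    then have "s m x = s i (s (m - 1) y)"
      using X.s_s_le[OF y, of i "m - 1"] assms(2) n x by simp
    with True that[of i "s (m - 1) y"] show ?thesis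
      using assms(2) n \<open>i \<le> n'\<close> y X.s_closed by simp
  next
    case False
    then have "s m x = s (Suc i) (s m y)"
      using X.s_s_le[OF y, of m i] \<open>i \<le> n'\<close> x by simp
    with False that[of "Suc i" "s m y"] show ?thesis
      using n \<open>i \<le> n'\<close> y X.s_closed by simp
  qed
  moreover obtain a where "a \<in> carrier (G n)" and "loop_degen n m = sG j a"
    using loop_degen_eq_s calculation assms(2) by blast
  ultimately show ?thesis
    using degenerate_act_s by simp
qed

lemma front_face_A_simplex_le:
  "x \<in> X n \<Longrightarrow> k \<le> m \<Longrightarrow> m \<le> n \<Longrightarrow>
    front_face d (Suc n) k (A_simplex n m x) = front_face d n k x"
  by (simp add: front_face_act loop_degen_closed X.s_closed front_face_loop_degen_le
      X.front_face_s_ge act_one X.front_face_closed)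

lemma back_face_A_simplex_le:
  "x \<in> X n \<Longrightarrow> k \<le> m \<Longrightarrow> m \<le> n \<Longrightarrow>
    back_face d k (A_simplex n m x) = A_simplex (n - k) (m - k) (back_face d k x)"
  by (simp add: back_face_act[of _ "Suc n"] loop_degen_closed X.s_closed back_face_loop_degen_le
      X.back_face_s_ge)

lemma front_face_A_simplex_ge:
  "x \<in> X n \<Longrightarrow> m \<le> k \<Longrightarrow> k \<le> n \<Longrightarrow>
    front_face d (Suc n) (Suc k) (A_simplex n m x) = A_simplex k m (front_face d n k x)"
  by (simp add: front_face_act loop_degen_closed X.s_closed front_face_loop_degen_ge X.front_face_s_le)

lemma back_face_A_simplex_ge:
  "x \<in> X n \<Longrightarrow> m \<le> k \<Longrightarrow> k \<le> n \<Longrightarrow> back_face d (Suc k) (A_simplex n m x) = back_face d k x"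
  by (simp add: back_face_act[of _ "Suc n"] loop_degen_closed X.s_closed back_face_loop_degen_ge
      X.back_face_s_le act_one X.back_face_closed)

lemma A_op_nchain:
  "m \<le> n \<Longrightarrow> A_op X s sG act g n m (nchain X s n x) = nchain X s (Suc n) (A_simplex n m x)"
  using degenerate_A_simplex by (simp add: A_op_def nchain_def)

end

theorem lemma8p1:
  fixes G :: "nat \<Rightarrow> 'g monoid" and dG sG :: "nat \<Rightarrow> 'g \<Rightarrow> 'g"
    and X :: "nat \<Rightarrow> 'x set" and d s :: "nat \<Rightarrow> 'x \<Rightarrow> 'x"
    and act :: "'g \<Rightarrow> 'x \<Rightarrow> 'x" and g :: 'g and \<sigma> :: 'x and n m k :: nat
  assumes "simplicial_action G dG sG X d s act"
    and "is_loop G dG g"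
    and "\<sigma> \<in> X n"
    and "m \<le> n" and "k \<le> Suc n"
  shows "P_op X d s (Suc n) k (A_op X s sG act g n m (nchain X s n \<sigma>)) =
    (if k \<le> m then
       frag_cmul ((-1) ^ k)
         (tensor_map id (A_op X s sG act g (n - k) (m - k)) 1 k (P_op X d s n k (nchain X s n \<sigma>)))
     else
       tensor_map (A_op X s sG act g (k - 1) m) id 0 (k - 1) (P_op X d s n (k - 1) (nchain X s n \<sigma>)))"
proof -
  interpret sset_action_loop G dG sG X d s act g
    using assms(1,2) by unfold_locales
  let ?\<tau> = "A_simplex n m \<sigma>"
  have lhs: "P_op X d s (Suc n) k (A_op X s sG act g n m (nchain X s n \<sigma>)) =
      tensor (nchain X s k (front_face d (Suc n) k ?\<tau>)) (nchain X s (Suc n - k) (back_face d k ?\<tau>))"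
    using assms(4,5) by (simp add: A_op_nchain X.P_op_nchain)
  show ?thesis
  proof (cases "k \<le> m")
    case True
    then have "Suc n - k = Suc (n - k)"
      using assms(4) by simp
    with True lhs show ?thesis
      using assms(3,4)
      by (simp add: X.P_op_nchain tensor_map_tensor_nchain A_op_nchain X.back_face_closed
          front_face_A_simplex_le back_face_A_simplex_le power_mult_distrib[symmetric])
  next
    case False
    then obtain k' where k: "k = Suc k'" and "m \<le> k'"
      by (cases k) auto
    with lhs show ?thesis
      using assms(3,5)
      by (simp add: X.P_op_nchain tensor_map_tensor_nchain A_op_nchain X.front_face_closed
          front_face_A_simplex_ge back_face_A_simplex_ge)
  qed
qed

end
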